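(* For $N\ge1$ let $G_N(z,w)=2\sqrt2\sum_{k=0}^{N-1}\sum_{\ell=0}^k\frac{(2k+3)(2\ell+2)}{(2k+4)!!(2\ell+3)!!}(\sqrt2z)^{2k+1}(\sqrt2w)^{2\ell}$, $\varkappa_N(z,w)=G_N(z,w)-G_N(w,z)$ (the skew-kernel for the weight $(1+|z|^2)e^{-2|z|^2}$), and $\widehat\varkappa_N(z,w)=(zw)^3\varkappa_N(z,w)$. Then $$\big[z\partial_z^2-(2z^2+2)\partial_z-2z\big]\widehat\varkappa_N(z,w)=4(zw)^3\sum_{k=0}^{2N-1}\frac{(2zw)^k}{k!}-\frac12\frac{(2N+1)(2N+3)}{(2N+2)!!}(\sqrt2z)^{2N+3}\sum_{\ell=0}^{N-1}\frac{2\ell+2}{(2\ell+3)!!}(\sqrt2w)^{2\ell+3}.$$ Moreover, as $N\to\infty$, $\varkappa_N(z,w)$ converges uniformly for $z,w$ in compact subsets of $\mathbb{C}$ to $$\frac{\sqrt\pi}{4}\frac{(2z^2-1)(2w^2-1)}{(zw)^3}e^{z^2+w^2}\big(\operatorname{erf}(z-w)+\operatorname{erf}(w)-\operatorname{erf}(z)\big)-\frac{z(2w^2-1)}{2(zw)^3}e^{w^2}+\frac{w(2z^2-1)}{2(zw)^3}e^{z^2}-\frac{z-w}{2(zw)^3}e^{2zw}.$$ *)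

theory Defs
  imports "HOL-Complex_Analysis.Complex_Analysis"
begin

fun dfact :: "nat \<Rightarrow> nat" where
  "dfact 0 = 1"
| "dfact (Suc 0) = 1"
| "dfact (Suc (Suc n)) = Suc (Suc n) * dfact n"

definition cerf :: "complex \<Rightarrow> complex" where
  "cerf z = (2 / complex_of_real (sqrt pi)) *
     contour_integral (linepath 0 z) (\<lambda>t. exp (- (t^2)))"

definition GN :: "nat \<Rightarrow> complex \<Rightarrow> complex \<Rightarrow> complex" where
  "GN N z w = 2 * complex_of_real (sqrt 2) *
     (\<Sum>k<N. \<Sum>l\<le>k.
        of_nat ((2*k+3) * (2*l+2)) / of_nat (dfact (2*k+4) * dfact (2*l+3))
        * (complex_of_real (sqrt 2) * z) ^ (2*k+1)
        * (complex_of_real (sqrt 2) * w) ^ (2*l))"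

definition kappaN :: "nat \<Rightarrow> complex \<Rightarrow> complex \<Rightarrow> complex" where
  "kappaN N z w = GN N z w - GN N w z"

definition kappahatN :: "nat \<Rightarrow> complex \<Rightarrow> complex \<Rightarrow> complex" where
  "kappahatN N z w = (z * w) ^ 3 * kappaN N z w"

text \<open>The claimed limit kernel (formula valid for z w \<noteq> 0).\<close>
definition kappa_lim :: "complex \<Rightarrow> complex \<Rightarrow> complex" where
  "kappa_lim z w =
     complex_of_real (sqrt pi) / 4 * ((2*z^2 - 1) * (2*w^2 - 1)) / (z*w)^3
       * exp (z^2 + w^2) * (cerf (z - w) + cerf w - cerf z)
     - z * (2*w^2 - 1) / (2 * (z*w)^3) * exp (w^2)
     + w * (2*z^2 - 1) / (2 * (z*w)^3) * exp (z^2)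
     - (z - w) / (2 * (z*w)^3) * exp (2*z*w)"

end

theory Submission
  imports Defs
begin

text \<open>
  \<open>\<widehat>\<kappa>\<^sub>N\<close> is a polynomial, so the differential identity is a finite computation: the operator
  \<open>L = z \<partial>\<^sup>2 - (2z\<^sup>2 + 2) \<partial> - 2z\<close> sends each monomial \<open>z\<^sup>n\<close> to a combination of \<open>z\<^sup>n\<^sup>-\<^sup>1\<close> and
  \<open>z\<^sup>n\<^sup>+\<^sup>1\<close>, and after this the double sum telescopes, in \<open>l\<close> through the recursion of the
  \<open>w\<close>-coefficients and in \<open>k\<close> into the remainder term, leaving the partial sums of \<open>exp (2zw)\<close>.

  For the limit, the homogeneous part of degree \<open>k\<close> of \<open>\<kappa>\<^sub>N\<close> is bounded by
  \<open>4R (R\<^sup>4)\<^sup>k / k!\<close> on \<open>|z|, |w| \<le> R\<close>, so the Weierstrass M-test gives locally uniform convergence to a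
  continuous \<open>\<kappa>\<close>. Then \<open>\<widehat>\<kappa> = (zw)\<^sup>3 \<kappa>\<close> is entire in \<open>z\<close> and, passing to the limit in the
  identity, solves \<open>L \<widehat>\<kappa> = 4 (zw)\<^sup>3 exp (2zw)\<close>. The explicit candidate \<open>(zw)\<^sup>3 \<kappa>_lim\<close> solves the
  same equation; both vanish at \<open>z = 0\<close> and are antisymmetric in \<open>(z, w)\<close>. A Wronskian argument shows
  that the solutions of \<open>L d = 0\<close> with \<open>d 0 = 0\<close> are the multiples of
  \<open>z + \<surd>\<pi>/2 (2z\<^sup>2 - 1) exp (z\<^sup>2) erf z\<close>, and antisymmetry forces the multiple to vanish.
\<close>

section \<open>Double factorials and the coefficients of the kernel\<close>

lemma dfact_pos: "dfact n > 0"
  by (induction n rule: dfact.induct) auto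

lemma dfact_add_2: "dfact (n + 2) = (n + 2) * dfact n"
  by (simp add: numeral_2_eq_2)

lemma dfact_Suc_mult_dfact: "dfact (Suc n) * dfact n = fact (Suc n)"
  by (induction n) (auto simp: algebra_simps)

lemma dfact_even: "dfact (2 * n) = 2 ^ n * fact n"
  by (induction n) (simp_all add: dfact_add_2[of "2 * _", simplified] algebra_simps)

lemma dfact_odd: "dfact (2 * n + 1) * (2 ^ n * fact n) = fact (2 * n + 1)"
  using dfact_Suc_mult_dfact[of "2 * n"] by (simp add: dfact_even)

lemma dfact_odd_lower_bound: "(2 * l + 2) * 2 ^ l \<le> dfact (2 * l + 3)"
proof (induction l)
  case (Suc l)
  have "(2 * Suc l + 2) * 2 ^ Suc l \<le> (2 * l + 5) * ((2 * l + 2) * 2 ^ l)"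
    by (simp add: algebra_simps)
  also have "\<dots> \<le> (2 * l + 5) * dfact (2 * l + 3)"
    using Suc by simp
  also have "\<dots> = dfact (2 * Suc l + 3)"
    using dfact_add_2[of "2 * l + 3"] by (simp add: algebra_simps)
  finally show ?case .
qed (simp add: numeral_3_eq_3)

lemma real_dfact_odd: "real (dfact (2 * k + 3)) = fact (2 * k + 3) / (2 ^ (k + 1) * fact (k + 1))"
proof -
  have "2 * (k + 1) + 1 = 2 * k + 3" by simp
  then have "real (dfact (2 * k + 3) * (2 ^ (k + 1) * fact (k + 1))) = fact (2 * k + 3)"
    using dfact_odd[of "k + 1"] by (metis of_nat_fact)
  then show ?thesis
    by (simp add: eq_divide_eq del: fact_Suc)
qed

text \<open>
  The coefficient of \<open>z\<^sup>2\<^sup>k\<^sup>+\<^sup>1 w\<^sup>2\<^sup>l\<close> in \<open>GN\<close> factors as \<open>zcoef k * wcoef l\<close>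
  (\<open>GN_eq_power_sum\<close>), the powers of \<open>\<surd>2\<close> and \<open>(2k+4)!! = 2\<^sup>k\<^sup>+\<^sup>2 (k+2)!\<close> being absorbed;
  \<open>tail_coef N\<close> is the coefficient of the remainder term of the identity.
\<close>

definition zcoef :: "nat \<Rightarrow> real" where
  "zcoef k = real (2 * k + 3) / (2 * fact (k + 2))"
definition wcoef :: "nat \<Rightarrow> real" where
  "wcoef l = real ((2 * l + 2) * 2 ^ (l + 1)) / real (dfact (2 * l + 3))"
definition tail_coef :: "nat \<Rightarrow> real" where
  "tail_coef N = real ((2 * N + 1) * (2 * N + 3)) / fact (N + 1)"

lemma zcoef_mult_eq_tail_coef: "zcoef k * real ((2 * k + 4) * (2 * k + 1)) = tail_coef k"
proof -
  have "2 * (fact (k + 2) :: real) = real (2 * k + 4) * fact (k + 1)"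
    by (simp add: algebra_simps)
  then show ?thesis
    unfolding zcoef_def tail_coef_def
    by (simp add: field_simps del: fact_Suc of_nat_add of_nat_mult) (simp add: algebra_simps)
qed

lemma zcoef_mult_eq_tail_coef_Suc: "zcoef k * real (2 * (2 * k + 5)) = tail_coef (Suc k)"
  unfolding zcoef_def tail_coef_def
  by (simp add: field_simps del: of_nat_add of_nat_mult fact_Suc) (simp add: algebra_simps)

lemma wcoef_Suc: "wcoef (Suc l) * real ((2 * l + 5) * (2 * l + 2)) = wcoef l * real (2 * (2 * l + 4))"
proof -
  have "dfact (2 * Suc l + 3) = (2 * l + 5) * dfact (2 * l + 3)"
    using dfact_add_2[of "2 * l + 3"] by (simp add: algebra_simps)
  then show ?thesis
    using dfact_pos[of "2 * l + 3"] unfolding wcoef_def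
    by (simp add: field_simps del: of_nat_add of_nat_mult) (simp add: algebra_simps)
qed

lemma four_power_eq: "(4::real) ^ k = 2 ^ k * 2 ^ k"
  by (simp add: power_mult_distrib[symmetric])

lemma tail_coef_mult_wcoef: "tail_coef k * wcoef k = 4 * 4 ^ k / fact (2 * k)"
proof -
  have "(fact (2 * k + 3) :: real) = real ((2 * k + 3) * (2 * k + 2) * (2 * k + 1)) * fact (2 * k)"
    by (simp add: fact_Suc numeral_3_eq_3 algebra_simps)
  then show ?thesis
    unfolding tail_coef_def wcoef_def real_dfact_odd four_power_eq
    by (simp add: field_simps del: fact_Suc of_nat_add of_nat_mult) (simp add: algebra_simps)
qed

lemma zcoef_mult_wcoef: "zcoef k * wcoef k * real (2 * (2 * k + 4)) = 8 * 4 ^ k / fact (2 * k + 1)"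
proof -
  have "(fact (2 * k + 3) :: real) = real ((2 * k + 3) * (2 * k + 2)) * fact (2 * k + 1)"
    by (simp add: fact_Suc numeral_3_eq_3 algebra_simps)
  moreover have "2 * (fact (k + 2) :: real) = real (2 * k + 4) * fact (k + 1)"
    by (simp add: algebra_simps)
  ultimately show ?thesis
    unfolding zcoef_def wcoef_def real_dfact_odd four_power_eq
    by (simp add: field_simps del: fact_Suc of_nat_add of_nat_mult) (simp add: algebra_simps)
qed

lemma sqrt2_power_even: "sqrt 2 ^ (2 * n) = 2 ^ n"
  by (simp add: power_mult)

lemma GN_coefficient:
  "2 * sqrt 2 * (real ((2 * k + 3) * (2 * l + 2)) / real (dfact (2 * k + 4) * dfact (2 * l + 3)))
     * sqrt 2 ^ (2 * k + 1) * sqrt 2 ^ (2 * l) = zcoef k * wcoef l"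
proof -
  define F where "F = (fact (k + 2) :: real)"
  define D where "D = real (dfact (2 * l + 3))"
  have pos: "F > 0" "D > 0"
    unfolding F_def D_def using dfact_pos by simp_all
  have "2 * k + 4 = 2 * (k + 2)" by simp
  then have d: "real (dfact (2 * k + 4)) = 2 ^ (k + 2) * F"
    unfolding F_def by (simp only: dfact_even of_nat_mult of_nat_power of_nat_fact of_nat_numeral)
  have s: "2 * sqrt 2 * sqrt 2 ^ (2 * k + 1) * sqrt 2 ^ (2 * l) = 2 ^ (k + 2) * (2 ^ l :: real)"
    by (simp add: power_add sqrt2_power_even)
  have "2 * sqrt 2 * (real ((2 * k + 3) * (2 * l + 2)) / real (dfact (2 * k + 4) * dfact (2 * l + 3)))
      * sqrt 2 ^ (2 * k + 1) * sqrt 2 ^ (2 * l)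
    = (2 * sqrt 2 * sqrt 2 ^ (2 * k + 1) * sqrt 2 ^ (2 * l))
      * (real ((2 * k + 3) * (2 * l + 2)) / (real (dfact (2 * k + 4)) * D))"
    by (simp only: D_def of_nat_mult[of "dfact _"] mult_ac)
  also have "\<dots> = 2 ^ (k + 2) * 2 ^ l * real ((2 * k + 3) * (2 * l + 2)) / (2 ^ (k + 2) * F * D)"
    unfolding s d by simp
  also have "\<dots> = zcoef k * wcoef l"
    using pos unfolding zcoef_def wcoef_def F_def[symmetric] D_def[symmetric]
    by (simp add: field_simps power_add del: of_nat_add of_nat_mult) (simp add: algebra_simps)
  finally show ?thesis .
qed

lemma GN_eq_power_sum:
  "GN N z w = (\<Sum>k<N. \<Sum>l\<le>k. of_real (zcoef k) * of_real (wcoef l) * z ^ (2 * k + 1) * w ^ (2 * l))"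
  unfolding GN_def sum_distrib_left of_real_mult[symmetric]
proof (intro sum.cong refl)
  fix k l
  show "2 * complex_of_real (sqrt 2) * (of_nat ((2 * k + 3) * (2 * l + 2))
        / of_nat (dfact (2 * k + 4) * dfact (2 * l + 3))
      * (complex_of_real (sqrt 2) * z) ^ (2 * k + 1) * (complex_of_real (sqrt 2) * w) ^ (2 * l))
    = of_real (zcoef k * wcoef l) * z ^ (2 * k + 1) * w ^ (2 * l)"
    unfolding GN_coefficient[symmetric] power_mult_distrib by (simp add: mult_ac)
qed

lemma kappahatN_eq_power_sum:
  "kappahatN N z w = (\<Sum>k<N. \<Sum>l\<le>k.
      of_real (wcoef l) * w ^ (2 * l + 3) * (of_real (zcoef k) * z ^ (2 * k + 4))
      - of_real (zcoef k) * w ^ (2 * k + 4) * (of_real (wcoef l) * z ^ (2 * l + 3)))"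
  unfolding kappahatN_def kappaN_def GN_eq_power_sum sum_subtractf[symmetric] sum_distrib_left
  by (intro sum.cong refl) (simp add: power_add power_mult_distrib algebra_simps eval_nat_numeral)

section \<open>The differential identity\<close>

definition kernel_operator :: "(complex \<Rightarrow> complex) \<Rightarrow> complex \<Rightarrow> complex" where
  "kernel_operator f z = z * deriv (deriv f) z - (2 * z ^ 2 + 2) * deriv f z - 2 * z * f z"

lemma kernel_operator_eq:
  assumes "\<And>z. (f has_field_derivative f' z) (at z)"
    and "\<And>z. (f' has_field_derivative f'' z) (at z)"
  shows "kernel_operator f z = z * f'' z - (2 * z ^ 2 + 2) * f' z - 2 * z * f z"
proof -
  have "deriv f = f'"
    using assms(1) by (auto intro: DERIV_imp_deriv)
  then show ?thesis
    unfolding kernel_operator_def using DERIV_imp_deriv[OF assms(2)] by simp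
qed

lemma entire_field_differentiable: "f holomorphic_on UNIV \<Longrightarrow> f field_differentiable at z"
  by (rule holomorphic_on_imp_differentiable_at) auto

lemma entire_deriv: "f holomorphic_on UNIV \<Longrightarrow> deriv f holomorphic_on UNIV"
  by (rule holomorphic_deriv) auto

lemma kernel_operator_diff:
  assumes "f holomorphic_on UNIV" "g holomorphic_on UNIV"
  shows "kernel_operator (\<lambda>z. f z - g z) z = kernel_operator f z - kernel_operator g z"
proof -
  have d1: "deriv (\<lambda>z. f z - g z) = (\<lambda>z. deriv f z - deriv g z)"
    using assms by (auto intro!: deriv_diff entire_field_differentiable)
  have d2: "deriv (\<lambda>z. deriv f z - deriv g z) z = deriv (deriv f) z - deriv (deriv g) z"
    using assms by (auto intro!: deriv_diff entire_field_differentiable entire_deriv)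
  show ?thesis
    unfolding kernel_operator_def d1 d2 by (simp add: algebra_simps)
qed

lemma kernel_operator_cmult:
  assumes "f holomorphic_on UNIV"
  shows "kernel_operator (\<lambda>z. c * f z) z = c * kernel_operator f z"
proof -
  have d1: "deriv (\<lambda>z. c * f z) = (\<lambda>z. c * deriv f z)"
    using assms by (auto intro!: deriv_cmult entire_field_differentiable)
  have d2: "deriv (\<lambda>z. c * deriv f z) z = c * deriv (deriv f) z"
    using assms by (auto intro!: deriv_cmult entire_field_differentiable entire_deriv)
  show ?thesis
    unfolding kernel_operator_def d1 d2 by (simp add: algebra_simps)
qed

lemma kernel_operator_sum:
  assumes "\<And>i. f i holomorphic_on UNIV"
  shows "kernel_operator (\<lambda>z. \<Sum>i\<in>I. f i z) z = (\<Sum>i\<in>I. kernel_operator (f i) z)"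
proof -
  have "deriv (\<lambda>z. \<Sum>i\<in>I. f i z) = (\<lambda>z. \<Sum>i\<in>I. deriv (f i) z)"
    using assms by (auto intro!: deriv_sum entire_field_differentiable)
  moreover have "deriv (\<lambda>z. \<Sum>i\<in>I. deriv (f i) z) z = (\<Sum>i\<in>I. deriv (deriv (f i)) z)"
    using assms by (auto intro!: deriv_sum entire_field_differentiable entire_deriv)
  ultimately show ?thesis
    unfolding kernel_operator_def by (simp add: sum_subtractf sum_distrib_left)
qed

lemma kernel_operator_power:
  "kernel_operator (\<lambda>z. z ^ (m + 3)) z
     = of_nat ((m + 3) * m) * z ^ (m + 2) - of_nat (2 * (m + 4)) * z ^ (m + 4)"
proof -
  have "kernel_operator (\<lambda>z. z ^ (m + 3)) z
      = z * (of_nat (m + 3) * (of_nat (m + 2) * z ^ (m + 1)))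
        - (2 * z ^ 2 + 2) * (of_nat (m + 3) * z ^ (m + 2)) - 2 * z * z ^ (m + 3)"
  proof (rule kernel_operator_eq)
    show "((\<lambda>z. z ^ (m + 3)) has_field_derivative of_nat (m + 3) * z ^ (m + 2)) (at z)" for z
      using DERIV_power[OF DERIV_ident, of "m + 3" z] by simp
    show "((\<lambda>z. of_nat (m + 3) * z ^ (m + 2)) has_field_derivative
        of_nat (m + 3) * (of_nat (m + 2) * z ^ (m + 1))) (at z)" for z
      using DERIV_cmult[OF DERIV_power[OF DERIV_ident, of "m + 2" z]] by simp
  qed
  also have "\<dots> = of_nat ((m + 3) * m) * z ^ (m + 2) - of_nat (2 * (m + 4)) * z ^ (m + 4)"
    by (simp add: power_add power2_eq_square power3_eq_cube power4_eq_xxxx algebra_simps)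
  finally show ?thesis .
qed

definition kernel_remainder :: "nat \<Rightarrow> complex \<Rightarrow> complex \<Rightarrow> complex" where
  "kernel_remainder N z w
     = of_real (tail_coef N) * z ^ (2 * N + 3) * (\<Sum>l<N. of_real (wcoef l) * w ^ (2 * l + 3))"

definition telescope_term :: "nat \<Rightarrow> complex \<Rightarrow> complex" where
  "telescope_term l z = of_real (wcoef l) * of_nat ((2 * l + 3) * (2 * l)) * z ^ (2 * l + 2)"

lemma kernel_operator_zcoef_monomial:
  "kernel_operator (\<lambda>z. of_real (zcoef k) * z ^ (2 * k + 4)) z
     = of_real (tail_coef k) * z ^ (2 * k + 3) - of_real (tail_coef (Suc k)) * z ^ (2 * k + 5)"
proof -
  have "2 * k + 4 = (2 * k + 1) + 3" "2 * k + 3 = (2 * k + 1) + 2" "2 * k + 5 = (2 * k + 1) + 4"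
    by simp_all
  then have p: "kernel_operator (\<lambda>z. z ^ (2 * k + 4)) z
      = of_nat ((2 * k + 4) * (2 * k + 1)) * z ^ (2 * k + 3) - of_nat (2 * (2 * k + 5)) * z ^ (2 * k + 5)"
    by (simp only: kernel_operator_power)
  have "kernel_operator (\<lambda>z. of_real (zcoef k) * z ^ (2 * k + 4)) z
      = of_real (zcoef k) * kernel_operator (\<lambda>z. z ^ (2 * k + 4)) z"
    by (rule kernel_operator_cmult) (intro holomorphic_intros)
  also have "\<dots> = of_real (tail_coef k) * z ^ (2 * k + 3) - of_real (tail_coef (Suc k)) * z ^ (2 * k + 5)"
    unfolding p zcoef_mult_eq_tail_coef[of k, symmetric] zcoef_mult_eq_tail_coef_Suc[of k, symmetric]
    by (simp add: algebra_simps)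
  finally show ?thesis .
qed

lemma telescope_term_Suc:
  "telescope_term (Suc l) z = of_real (wcoef l) * of_nat (2 * (2 * l + 4)) * z ^ (2 * l + 4)"
proof -
  have "of_real (wcoef (Suc l)) * of_nat ((2 * l + 5) * (2 * l + 2))
      = (of_real (wcoef l) * of_nat (2 * (2 * l + 4)) :: complex)"
    using arg_cong[OF wcoef_Suc[of l], of "of_real :: real \<Rightarrow> complex"] by simp
  moreover have "(2 * Suc l + 3) * (2 * Suc l) = (2 * l + 5) * (2 * l + 2)" "2 * Suc l + 2 = 2 * l + 4"
    by simp_all
  ultimately show ?thesis
    unfolding telescope_term_def by (metis (no_types, lifting))
qed

lemma kernel_operator_wcoef_monomial:
  "kernel_operator (\<lambda>z. of_real (wcoef l) * z ^ (2 * l + 3)) z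
     = telescope_term l z - telescope_term (Suc l) z"
proof -
  have "kernel_operator (\<lambda>z. of_real (wcoef l) * z ^ (2 * l + 3)) z
      = of_real (wcoef l) * kernel_operator (\<lambda>z. z ^ (2 * l + 3)) z"
    by (rule kernel_operator_cmult) (intro holomorphic_intros)
  then show ?thesis
    unfolding kernel_operator_power telescope_term_Suc telescope_term_def[of l] by (simp add: algebra_simps)
qed

lemma kernel_diagonal_terms:
  fixes z w :: complex
  shows "of_real (tail_coef k * wcoef k) * (z * w) ^ (2 * k + 3)
     + of_real (zcoef k * wcoef k * real (2 * (2 * k + 4))) * (z * w) ^ (2 * k + 4)
   = 4 * (z * w) ^ 3 * ((2 * z * w) ^ (2 * k) / fact (2 * k)
                       + (2 * z * w) ^ (2 * k + 1) / fact (2 * k + 1))"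
proof -
  have four: "(4::complex) ^ k = (2 ^ k) ^ 2"
    by (simp add: power_mult_distrib[symmetric] power2_eq_square)
  have "of_real (4 * 4 ^ k / fact (2 * k)) * (z * w) ^ (2 * k + 3)
      = 4 * (z * w) ^ 3 * ((2 * z * w) ^ (2 * k) / fact (2 * k))"
    by (simp add: power_add power_mult_distrib power_mult four field_simps del: fact_Suc)
  moreover have "of_real (8 * 4 ^ k / fact (2 * k + 1)) * (z * w) ^ (2 * k + 4)
      = 4 * (z * w) ^ 3 * ((2 * z * w) ^ (2 * k + 1) / fact (2 * k + 1))"
    by (simp add: power_add power_mult_distrib power_mult four field_simps power3_eq_cube
        power4_eq_xxxx del: fact_Suc)
  ultimately show ?thesis
    unfolding tail_coef_mult_wcoef zcoef_mult_wcoef by (simp add: algebra_simps)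
qed

lemma kernel_operator_row:
  "kernel_operator (\<lambda>z. \<Sum>l\<le>k.
       of_real (wcoef l) * w ^ (2 * l + 3) * (of_real (zcoef k) * z ^ (2 * k + 4))
       - of_real (zcoef k) * w ^ (2 * k + 4) * (of_real (wcoef l) * z ^ (2 * l + 3))) z
   = kernel_remainder k z w - kernel_remainder (Suc k) z w
     + 4 * (z * w) ^ 3 * ((2 * z * w) ^ (2 * k) / fact (2 * k)
                         + (2 * z * w) ^ (2 * k + 1) / fact (2 * k + 1))"
proof -
  define X where "X = of_real (tail_coef k) * z ^ (2 * k + 3) - of_real (tail_coef (Suc k)) * z ^ (2 * k + 5)"
  define Y where "Y = of_real (zcoef k) * w ^ (2 * k + 4)"
  define a where "a l = of_real (wcoef l) * w ^ (2 * l + 3)" for l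
  have "kernel_operator (\<lambda>z. \<Sum>l\<le>k.
       of_real (wcoef l) * w ^ (2 * l + 3) * (of_real (zcoef k) * z ^ (2 * k + 4))
       - of_real (zcoef k) * w ^ (2 * k + 4) * (of_real (wcoef l) * z ^ (2 * l + 3))) z
     = (\<Sum>l<Suc k. a l * X - Y * (telescope_term l z - telescope_term (Suc l) z))"
    by (simp add: kernel_operator_sum kernel_operator_diff kernel_operator_cmult holomorphic_intros
        kernel_operator_zcoef_monomial kernel_operator_wcoef_monomial lessThan_Suc_atMost a_def X_def Y_def)
  also have "\<dots> = (\<Sum>l<Suc k. a l) * X - Y * (\<Sum>l<Suc k. telescope_term l z - telescope_term (Suc l) z)"
    by (simp add: sum_subtractf sum_distrib_left sum_distrib_right right_diff_distrib del: sum.lessThan_Suc)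
  also have "\<dots> = X * (\<Sum>l<k. a l) + X * a k + Y * telescope_term (Suc k) z"
    unfolding sum_lessThan_telescope'[of "\<lambda>l. telescope_term l z"]
    by (simp add: telescope_term_def[of 0] algebra_simps)
  also have "\<dots> = kernel_remainder k z w - kernel_remainder (Suc k) z w
     + of_real (tail_coef k * wcoef k) * (z * w) ^ (2 * k + 3)
     + of_real (zcoef k * wcoef k * real (2 * (2 * k + 4))) * (z * w) ^ (2 * k + 4)"
    unfolding X_def Y_def a_def kernel_remainder_def telescope_term_Suc
    by (simp add: algebra_simps power_mult_distrib)
  finally show ?thesis
    unfolding kernel_diagonal_terms[symmetric] by (simp add: algebra_simps)
qed

lemma sum_lessThan_double: "(\<Sum>j<2 * (n::nat). f j) = (\<Sum>k<n. f (2 * k) + f (2 * k + 1))"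
  by (induction n) (simp_all add: algebra_simps)

lemma kernel_operator_kappahatN:
  "kernel_operator (\<lambda>z. kappahatN N z w) z
     = 4 * (z * w) ^ 3 * (\<Sum>j<2 * N. (2 * z * w) ^ j / fact j) - kernel_remainder N z w"
proof -
  have "kernel_operator (\<lambda>z. kappahatN N z w) z
      = (\<Sum>k<N. kernel_operator (\<lambda>z. \<Sum>l\<le>k.
          of_real (wcoef l) * w ^ (2 * l + 3) * (of_real (zcoef k) * z ^ (2 * k + 4))
          - of_real (zcoef k) * w ^ (2 * k + 4) * (of_real (wcoef l) * z ^ (2 * l + 3))) z)"
    unfolding kappahatN_eq_power_sum by (simp add: kernel_operator_sum holomorphic_intros)
  also have "\<dots> = (\<Sum>k<N. kernel_remainder k z w - kernel_remainder (Suc k) z w)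
      + (\<Sum>k<N. 4 * (z * w) ^ 3 * ((2 * z * w) ^ (2 * k) / fact (2 * k)
                                  + (2 * z * w) ^ (2 * k + 1) / fact (2 * k + 1)))"
    unfolding kernel_operator_row by (simp only: sum.distrib)
  also have "\<dots> = 4 * (z * w) ^ 3 * (\<Sum>j<2 * N. (2 * z * w) ^ j / fact j) - kernel_remainder N z w"
    unfolding sum_lessThan_telescope'[of "\<lambda>k. kernel_remainder k z w"]
      sum_lessThan_double sum_distrib_left[symmetric]
    by (simp add: kernel_remainder_def)
  finally show ?thesis .
qed

lemma remainder_coefficient:
  "1 / 2 * (real ((2 * N + 1) * (2 * N + 3)) / real (dfact (2 * N + 2))) * sqrt 2 ^ (2 * N + 3)
     * (real (2 * l + 2) / real (dfact (2 * l + 3)) * sqrt 2 ^ (2 * l + 3)) = tail_coef N * wcoef l"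
proof -
  define F where "F = (fact (N + 1) :: real)"
  define G where "G = real (dfact (2 * N + 2))"
  define D where "D = real (dfact (2 * l + 3))"
  have pos: "F > 0" "G > 0" "D > 0"
    unfolding F_def G_def D_def by (simp_all only: fact_gt_zero of_nat_0_less_iff dfact_pos)
  have "2 * N + 2 = 2 * (N + 1)" by simp
  then have G: "G = 2 ^ (N + 1) * F"
    unfolding F_def G_def by (simp only: dfact_even of_nat_mult of_nat_power of_nat_fact of_nat_numeral)
  have s: "sqrt 2 ^ (2 * N + 3) * sqrt 2 ^ (2 * l + 3) = 2 ^ (N + 1) * 2 ^ (l + 1) * (2 :: real)"
  proof -
    have "sqrt 2 ^ (2 * N + 3) * sqrt 2 ^ (2 * l + 3) = sqrt 2 ^ (2 * (N + l + 3))"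
      by (simp flip: power_add)
    then show ?thesis
      by (simp only: sqrt2_power_even) (simp add: power_add)
  qed
  have "1 / 2 * (real ((2 * N + 1) * (2 * N + 3)) / G) * sqrt 2 ^ (2 * N + 3)
      * (real (2 * l + 2) / D * sqrt 2 ^ (2 * l + 3))
    = 1 / 2 * (sqrt 2 ^ (2 * N + 3) * sqrt 2 ^ (2 * l + 3))
      * (real ((2 * N + 1) * (2 * N + 3)) * real (2 * l + 2) / (G * D))"
    by (simp add: field_simps)
  also have "\<dots> = 2 ^ (N + 1) * 2 ^ (l + 1) * real ((2 * N + 1) * (2 * N + 3)) * real (2 * l + 2)
      / (2 ^ (N + 1) * F * D)"
    unfolding s G by simp
  also have "\<dots> = tail_coef N * wcoef l"
    using pos unfolding tail_coef_def wcoef_def F_def[symmetric] D_def[symmetric]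
    by (simp add: field_simps del: of_nat_add of_nat_mult) (simp add: algebra_simps)
  finally show ?thesis
    unfolding G_def D_def .
qed

lemma kernel_remainder_eq:
  "1/2 * (of_nat ((2*N+1) * (2*N+3)) / of_nat (dfact (2*N+2)))
     * (complex_of_real (sqrt 2) * z) ^ (2*N+3)
     * (\<Sum>l<N. of_nat (2*l+2) / of_nat (dfact (2*l+3)) * (complex_of_real (sqrt 2) * w) ^ (2*l+3))
   = kernel_remainder N z w"
  unfolding kernel_remainder_def sum_distrib_left
proof (intro sum.cong refl)
  fix l
  have "of_real (1 / 2 * (real ((2 * N + 1) * (2 * N + 3)) / real (dfact (2 * N + 2))) * sqrt 2 ^ (2 * N + 3)
     * (real (2 * l + 2) / real (dfact (2 * l + 3)) * sqrt 2 ^ (2 * l + 3))) * z ^ (2 * N + 3) * w ^ (2 * l + 3)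
    = of_real (tail_coef N) * z ^ (2 * N + 3) * (of_real (wcoef l) * w ^ (2 * l + 3))"
    unfolding remainder_coefficient by simp
  then show "1/2 * (of_nat ((2*N+1) * (2*N+3)) / of_nat (dfact (2*N+2))) * (complex_of_real (sqrt 2) * z) ^ (2*N+3)
       * (of_nat (2*l+2) / of_nat (dfact (2*l+3)) * (complex_of_real (sqrt 2) * w) ^ (2*l+3))
     = of_real (tail_coef N) * z ^ (2 * N + 3) * (of_real (wcoef l) * w ^ (2 * l + 3))"
    by (simp add: power_mult_distrib mult_ac)
qed

section \<open>The error function and the homogeneous equation\<close>

lemma cerf_primitive:
  obtains F :: "complex \<Rightarrow> complex" where "\<And>z. (F has_field_derivative exp (- (z ^ 2))) (at z)"
    and "\<And>z. cerf z = 2 / of_real (sqrt pi) * (F z - F 0)"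
proof (rule holomorphic_convex_primitive'[OF convex_UNIV open_UNIV])
  show "(\<lambda>t::complex. exp (- (t ^ 2))) holomorphic_on UNIV"
    by (intro holomorphic_intros)
next
  fix F :: "complex \<Rightarrow> complex"
  assume F: "\<And>z. z \<in> UNIV \<Longrightarrow> (F has_field_derivative exp (- (z ^ 2))) (at z within UNIV)"
  have "cerf z = 2 / of_real (sqrt pi) * (F z - F 0)" for z
  proof -
    have "((\<lambda>t. exp (- (t ^ 2))) has_contour_integral F z - F 0) (linepath 0 z)"
      using contour_integral_primitive[OF F, of "linepath 0 z"] by simp
    then show ?thesis
      unfolding cerf_def by (simp add: contour_integral_unique)
  qed
  with F show thesis
    by (rule that) simp
qed

lemma has_field_derivative_cerf:
  "(cerf has_field_derivative 2 / of_real (sqrt pi) * exp (- (z ^ 2))) (at z)"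
proof -
  obtain F where F: "\<And>z. (F has_field_derivative exp (- (z ^ 2))) (at z)"
    and cerf: "\<And>z. cerf z = 2 / of_real (sqrt pi) * (F z - F 0)"
    using cerf_primitive by blast
  show ?thesis
    unfolding cerf[abs_def] by (auto intro!: derivative_eq_intros F)
qed

lemma has_field_derivative_cerf_compose [derivative_intros]:
  "(g has_field_derivative g') (at x within s) \<Longrightarrow>
   ((\<lambda>x. cerf (g x)) has_field_derivative 2 / of_real (sqrt pi) * exp (- (g x ^ 2)) * g') (at x within s)"
  using DERIV_chain'[of g g' x s cerf] has_field_derivative_cerf by blast

lemma holomorphic_on_cerf [holomorphic_intros]:
  assumes "f holomorphic_on A"
  shows "(\<lambda>z. cerf (f z)) holomorphic_on A"
proof -
  have "cerf holomorphic_on UNIV"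
    using has_field_derivative_cerf
    by (auto simp: holomorphic_on_def field_differentiable_def intro: has_field_derivative_at_within)
  then have "cerf holomorphic_on f ` A"
    by (rule holomorphic_on_subset) simp
  from holomorphic_on_compose[OF assms this] show ?thesis
    by (simp add: o_def)
qed

lemma cerf_0 [simp]: "cerf 0 = 0"
  by (simp add: cerf_def)

lemma cerf_minus: "cerf (- z) = - cerf z"
proof -
  have "((\<lambda>z. cerf (- z) + cerf z) has_field_derivative 0) (at z)" for z
    by (auto intro!: derivative_eq_intros)
  then obtain c where "\<forall>z\<in>UNIV. cerf (- z) + cerf z = c"
    using has_field_derivative_zero_constant[OF convex_UNIV, of "\<lambda>z. cerf (- z) + cerf z"] by blast
  then have "\<And>z. cerf (- z) + cerf z = c"
    by blast
  from this[of z] this[of 0] show ?thesis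
    by (simp add: eq_neg_iff_add_eq_0)
qed

lemma continuous_eq_off_finite:
  fixes f g :: "complex \<Rightarrow> complex"
  assumes "continuous_on UNIV f" "continuous_on UNIV g" "finite Z" "\<And>z. z \<notin> Z \<Longrightarrow> f z = g z"
  shows "f z = g z"
proof -
  have "closure (- Z) = UNIV"
    using assms(3) by (simp add: closure_complement empty_interior_finite)
  moreover have "continuous_on UNIV (\<lambda>z. f z - g z)"
    using assms(1,2) by (intro continuous_intros)
  ultimately have "f z - g z = 0"
    using continuous_constant_on_closure[of "- Z" "\<lambda>z. f z - g z" 0 z] assms(4) by auto
  then show ?thesis by simp
qed

lemma Euler_equation_solution:
  fixes V V' :: "complex \<Rightarrow> complex"
  assumes V: "\<And>z. (V has_field_derivative V' z) (at z)"
    and eq: "\<And>z. z * V' z = of_nat n * V z"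
  shows "V z = V 1 * z ^ n"
proof (rule continuous_eq_off_finite[of V _ "{0}"])
  show contV: "continuous_on UNIV V"
    using V by (auto intro: DERIV_continuous_on)
  have "((\<lambda>z. V z / z ^ n) has_field_derivative 0) (at z)" if "z \<noteq> 0" for z
  proof -
    have "((\<lambda>z. V z / z ^ n) has_field_derivative
        (V' z * z ^ n - V z * (of_nat n * z ^ (n - 1))) / (z ^ n * z ^ n)) (at z)"
      using that by (auto intro!: derivative_eq_intros V)
    moreover have "z * (V' z * z ^ n - V z * (of_nat n * z ^ (n - 1))) = z ^ n * (z * V' z - of_nat n * V z)"
      by (cases n) (simp_all add: algebra_simps)
    ultimately show ?thesis
      using that eq[of z] by simp
  qed
  moreover have "continuous_on (- {0}) (\<lambda>z. V z / z ^ n)"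
    by (intro continuous_intros continuous_on_subset[OF contV]) auto
  ultimately obtain c where c: "\<And>z. z \<in> - {0} \<Longrightarrow> V z / z ^ n = c"
    using DERIV_zero_connected_constant[of "- {0}" "{}" "\<lambda>z. V z / z ^ n"]
    by (auto simp: connected_punctured_universe open_Compl)
  show "V z = V 1 * z ^ n" if "z \<notin> {0}" for z
    using c[of z] c[of 1] that by (simp add: field_simps)
qed (auto intro!: continuous_intros)

lemma zero_wronskian_imp_proportional:
  fixes e f :: "complex \<Rightarrow> complex"
  assumes e: "\<And>z. (e has_field_derivative e' z) (at z)"
    and f: "\<And>z. (f has_field_derivative f' z) (at z)"
    and W: "\<And>z. e' z * f z = e z * f' z"
    and Z: "finite {z. f z = 0}" and a: "f a \<noteq> 0"
  shows "e z = e a / f a * f z"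
proof -
  define Z where "Z = {z. f z = 0}"
  have cont: "continuous_on UNIV e" "continuous_on UNIV f"
    using e f by (auto intro: DERIV_continuous_on)
  have "((\<lambda>z. e z / f z) has_field_derivative 0) (at z)" if "z \<in> - Z" for z
  proof -
    have "((\<lambda>z. e z / f z) has_field_derivative (e' z * f z - e z * f' z) / (f z * f z)) (at z)"
      using that by (auto intro!: derivative_eq_intros e f simp: Z_def)
    then show ?thesis by (simp add: W)
  qed
  moreover have "continuous_on (- Z) (\<lambda>z. e z / f z)"
    by (intro continuous_intros continuous_on_subset[OF cont(1)] continuous_on_subset[OF cont(2)])
       (auto simp: Z_def)
  moreover have "open (- Z)" "connected (- Z)"
    using Z connected_open_delete_finite[of UNIV Z] unfolding Z_def[symmetric]
    by (auto simp: finite_imp_closed open_Compl Compl_eq_Diff_UNIV)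
  ultimately obtain c where c: "\<And>z. z \<in> - Z \<Longrightarrow> e z / f z = c"
    using DERIV_zero_connected_constant[of "- Z" "{}" "\<lambda>z. e z / f z"] by auto
  show ?thesis
  proof (rule continuous_eq_off_finite[OF cont(1) _ Z])
    show "continuous_on UNIV (\<lambda>z. e a / f a * f z)"
      by (intro continuous_intros cont)
    show "e z = e a / f a * f z" if "z \<notin> {z. f z = 0}" for z
      using c[of z] c[of a] that a by (simp add: Z_def field_simps)
  qed
qed

definition ode_sol_even :: "complex \<Rightarrow> complex" where
  "ode_sol_even z = (2 * z ^ 2 - 1) * exp (z ^ 2)"

definition ode_sol_even' :: "complex \<Rightarrow> complex" where
  "ode_sol_even' z = (4 * z ^ 3 + 2 * z) * exp (z ^ 2)"

definition ode_sol_even'' :: "complex \<Rightarrow> complex" where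
  "ode_sol_even'' z = (8 * z ^ 4 + 16 * z ^ 2 + 2) * exp (z ^ 2)"

definition ode_sol_odd :: "complex \<Rightarrow> complex" where
  "ode_sol_odd z = z + of_real (sqrt pi) / 2 * ode_sol_even z * cerf z"

definition ode_sol_odd' :: "complex \<Rightarrow> complex" where
  "ode_sol_odd' z = 1 + of_real (sqrt pi) / 2 * ode_sol_even' z * cerf z + (2 * z ^ 2 - 1)"

lemma has_field_derivative_ode_sol_even: "(ode_sol_even has_field_derivative ode_sol_even' z) (at z)"
  unfolding ode_sol_even_def[abs_def] ode_sol_even'_def
  by (auto intro!: derivative_eq_intros simp: algebra_simps power2_eq_square power3_eq_cube)

lemma has_field_derivative_ode_sol_even': "(ode_sol_even' has_field_derivative ode_sol_even'' z) (at z)"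
  unfolding ode_sol_even'_def[abs_def] ode_sol_even''_def
  by (auto intro!: derivative_eq_intros
      simp: algebra_simps power2_eq_square power3_eq_cube power4_eq_xxxx)

lemma has_field_derivative_ode_sol_odd: "(ode_sol_odd has_field_derivative ode_sol_odd' z) (at z)"
proof -
  define p where "p = complex_of_real (sqrt pi)"
  have D: "(ode_sol_odd has_field_derivative 1 + p / 2 *
      (ode_sol_even' z * cerf z + ode_sol_even z * (2 / p * exp (- (z ^ 2))))) (at z)"
    unfolding ode_sol_odd_def[abs_def] p_def
    by (auto intro!: derivative_eq_intros has_field_derivative_ode_sol_even simp: algebra_simps)
  have "p \<noteq> 0"
    by (simp add: p_def)
  then have "p / 2 * (ode_sol_even z * (2 / p * exp (- (z ^ 2))))
      = (2 * z ^ 2 - 1) * (exp (z ^ 2) * exp (- (z ^ 2)))"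
    unfolding ode_sol_even_def by (simp add: field_simps)
  then have "p / 2 * (ode_sol_even z * (2 / p * exp (- (z ^ 2)))) = 2 * z ^ 2 - 1"
    by (simp add: mult_exp_exp)
  then have "1 + p / 2 * (ode_sol_even' z * cerf z + ode_sol_even z * (2 / p * exp (- (z ^ 2))))
      = ode_sol_odd' z"
    unfolding ode_sol_odd'_def p_def[symmetric] by (simp only: distrib_left mult.assoc add.assoc)
  with D show ?thesis
    by (simp only:)
qed

lemma ode_sol_even_equation:
  "z * ode_sol_even'' z = (2 * z ^ 2 + 2) * ode_sol_even' z + 2 * z * ode_sol_even z"
  unfolding ode_sol_even_def ode_sol_even'_def ode_sol_even''_def by algebra

lemma ode_sol_wronskian:
  "ode_sol_odd' z * ode_sol_even z - ode_sol_odd z * ode_sol_even' z = - 4 * z ^ 2 * exp (z ^ 2)"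
  unfolding ode_sol_odd_def ode_sol_odd'_def ode_sol_even_def ode_sol_even'_def by algebra

lemma finite_zeros_ode_sol_even: "finite {z. ode_sol_even z = 0}"
proof -
  define a where "a = complex_of_real (sqrt (1 / 2))"
  have a: "2 * a ^ 2 = 1"
    unfolding a_def by (simp flip: of_real_power)
  have "z = a \<or> z = - a" if "ode_sol_even z = 0" for z
  proof -
    have "2 * z ^ 2 = 1"
      using that by (simp add: ode_sol_even_def)
    then have "2 * z ^ 2 = 2 * a ^ 2"
      using a by simp
    then have "z ^ 2 = a ^ 2"
      by simp
    then show ?thesis
      by (simp add: power2_eq_iff)
  qed
  then have "{z. ode_sol_even z = 0} \<subseteq> {a, - a}"
    by blast
  then show ?thesis
    by (rule finite_subset) simp
qed

lemma kernel_operator_wronskian: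
  assumes d: "d holomorphic_on UNIV" and L: "\<And>z. kernel_operator d z = 0"
  obtains C where "\<And>z. deriv d z * ode_sol_even z - d z * ode_sol_even' z = C * z ^ 2 * exp (z ^ 2)"
proof -
  \<comment> \<open>The Wronskian \<open>W\<close> satisfies \<open>z W' = (2z\<^sup>2 + 2) W\<close>, so \<open>W exp (-z\<^sup>2)\<close> solves \<open>z V' = 2 V\<close>.\<close>
  define W where "W z = deriv d z * ode_sol_even z - d z * ode_sol_even' z" for z
  define W' where "W' z = (deriv (deriv d) z * ode_sol_even z + ode_sol_even' z * deriv d z)
      - (deriv d z * ode_sol_even' z + ode_sol_even'' z * d z)" for z
  define V where "V z = W z * exp (- (z ^ 2))" for z
  define V' where "V' z = W' z * exp (- (z ^ 2)) + exp (- (z ^ 2)) * (- (2 * z)) * W z" for z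
  have "(W has_field_derivative W' z) (at z)" for z
    unfolding W_def[abs_def] W'_def using d entire_deriv[OF d]
    by (intro DERIV_diff DERIV_mult has_field_derivative_ode_sol_even has_field_derivative_ode_sol_even'
        holomorphic_derivI) auto
  moreover have "((\<lambda>z. exp (- (z ^ 2))) has_field_derivative exp (- (z ^ 2)) * (- (2 * z))) (at z)" for z
    by (auto intro!: derivative_eq_intros)
  ultimately have "(V has_field_derivative V' z) (at z)" for z
    unfolding V_def[abs_def] V'_def by (intro DERIV_mult)
  moreover have "z * V' z = of_nat 2 * V z" for z
  proof -
    have "z * W' z - (2 * z ^ 2 + 2) * W z = ode_sol_even z * kernel_operator d z
        - d z * (z * ode_sol_even'' z - (2 * z ^ 2 + 2) * ode_sol_even' z - 2 * z * ode_sol_even z)"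
      unfolding kernel_operator_def W_def W'_def by (simp add: algebra_simps)
    then have "z * W' z - (2 * z ^ 2 + 2) * W z = 0"
      using L[of z] ode_sol_even_equation[of z] by simp
    moreover have "z * V' z - 2 * V z = exp (- (z ^ 2)) * (z * W' z - (2 * z ^ 2 + 2) * W z)"
      unfolding V_def V'_def by (simp add: algebra_simps power2_eq_square)
    ultimately show ?thesis
      by simp
  qed
  ultimately have V: "V z = V 1 * z ^ 2" for z
    by (rule Euler_equation_solution)
  have W: "W z = V z * exp (z ^ 2)" for z
    unfolding V_def by (simp add: mult.assoc mult_exp_exp)
  show ?thesis
  proof (rule that)
    show "deriv d z * ode_sol_even z - d z * ode_sol_even' z = V 1 * z ^ 2 * exp (z ^ 2)" for z
      using W[of z] V[of z] unfolding W_def by simp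
  qed
qed

lemma kernel_operator_homogeneous:
  assumes d: "d holomorphic_on UNIV" and L: "\<And>z. kernel_operator d z = 0" and d0: "d 0 = 0"
  shows "\<exists>C. \<forall>z. d z = C * ode_sol_odd z"
proof -
  obtain C where C: "\<And>z. deriv d z * ode_sol_even z - d z * ode_sol_even' z = C * z ^ 2 * exp (z ^ 2)"
    using kernel_operator_wronskian[OF d L] by blast
  \<comment> \<open>\<open>C / 4\<close> cancels the Wronskian of \<open>d\<close>: that of \<open>ode_sol_odd\<close> is \<open>-4 z\<^sup>2 exp (z\<^sup>2)\<close>.\<close>
  define e where "e z = d z + C / 4 * ode_sol_odd z" for z
  have e: "(e has_field_derivative deriv d z + C / 4 * ode_sol_odd' z) (at z)" for z
    unfolding e_def[abs_def] using d
    by (intro DERIV_add DERIV_cmult has_field_derivative_ode_sol_odd holomorphic_derivI) auto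
  have "(deriv d z + C / 4 * ode_sol_odd' z) * ode_sol_even z - e z * ode_sol_even' z
      = (deriv d z * ode_sol_even z - d z * ode_sol_even' z)
        + C / 4 * (ode_sol_odd' z * ode_sol_even z - ode_sol_odd z * ode_sol_even' z)" for z
    unfolding e_def by (simp add: algebra_simps)
  then have "(deriv d z + C / 4 * ode_sol_odd' z) * ode_sol_even z = e z * ode_sol_even' z" for z
    unfolding C ode_sol_wronskian by simp
  then have proportional: "e z = e 0 / ode_sol_even 0 * ode_sol_even z" for z
    by (rule zero_wronskian_imp_proportional[OF e has_field_derivative_ode_sol_even _
          finite_zeros_ode_sol_even]) (simp add: ode_sol_even_def)
  have "e 0 = 0"
    by (simp add: e_def d0 ode_sol_odd_def)
  then have "d z + C / 4 * ode_sol_odd z = 0" for z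
    using proportional[of z] by (simp add: e_def)
  then have "d z = - C / 4 * ode_sol_odd z" for z
    by (simp add: eq_neg_iff_add_eq_0)
  then show ?thesis
    by blast
qed

section \<open>Locally uniform convergence\<close>

definition kernel_term :: "nat \<Rightarrow> complex \<Rightarrow> complex \<Rightarrow> complex" where
  "kernel_term k z w = (\<Sum>l\<le>k. of_real (zcoef k) * of_real (wcoef l)
                          * (z ^ (2 * k + 1) * w ^ (2 * l) - w ^ (2 * k + 1) * z ^ (2 * l)))"

lemma kappaN_eq_sum_kernel_term: "kappaN N z w = (\<Sum>k<N. kernel_term k z w)"
  unfolding kappaN_def GN_eq_power_sum kernel_term_def sum_subtractf[symmetric]
  by (simp add: right_diff_distrib mult.assoc)

lemma zcoef_nonneg: "0 \<le> zcoef k"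
  by (simp add: zcoef_def)

lemma wcoef_nonneg: "0 \<le> wcoef l"
  by (simp add: wcoef_def)

lemma zcoef_le: "zcoef k \<le> 1 / fact (k + 1)"
proof -
  have "2 * (fact (k + 2) :: real) = real (2 * k + 4) * fact (k + 1)"
    by (simp add: algebra_simps)
  then show ?thesis
    unfolding zcoef_def by (simp add: field_simps del: fact_Suc of_nat_add of_nat_mult)
qed

lemma wcoef_le: "wcoef l \<le> 2"
  using dfact_odd_lower_bound[of l] dfact_pos[of "2 * l + 3"]
  unfolding wcoef_def by (simp add: field_simps del: of_nat_add of_nat_mult)

lemma tail_coef_le: "tail_coef N \<le> 4 * 4 ^ N / fact (N + 1)"
proof -
  have "N + 1 \<le> (2::nat) ^ N"
    using less_exp[of N] by (simp add: Suc_le_eq)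
  then have "(N + 1) * (N + 1) \<le> (2::nat) ^ N * 2 ^ N"
    by (intro mult_mono) simp_all
  then have "(2 * N + 1) * (2 * N + 3) \<le> 4 * (4::nat) ^ N"
    by (simp add: power_mult_distrib[symmetric] algebra_simps)
  then have "real ((2 * N + 1) * (2 * N + 3)) \<le> real (4 * 4 ^ N)"
    by (simp only: of_nat_le_iff)
  then have "real ((2 * N + 1) * (2 * N + 3)) \<le> 4 * 4 ^ N"
    by simp
  then show ?thesis
    unfolding tail_coef_def by (simp add: divide_right_mono del: of_nat_add of_nat_mult)
qed

lemma tail_coef_mult_le: "real N * tail_coef N \<le> 4 * 4 ^ N / fact N"
proof -
  have "real N * tail_coef N \<le> real N * (4 * 4 ^ N / fact (N + 1))"
    using tail_coef_le by (rule mult_left_mono) simp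
  also have "\<dots> = real N / real (N + 1) * (4 * 4 ^ N / fact N)"
    by (simp del: of_nat_add)
  also have "\<dots> \<le> 4 * 4 ^ N / fact N"
    by (rule mult_left_le_one_le) auto
  finally show ?thesis .
qed

lemma norm_power_mult_le:
  fixes z w :: complex
  assumes "1 \<le> R" "norm z \<le> R" "norm w \<le> R" "a + b \<le> n"
  shows "norm (z ^ a * w ^ b) \<le> R ^ n"
proof -
  have "norm (z ^ a * w ^ b) \<le> R ^ a * R ^ b"
    unfolding norm_mult norm_power using assms by (intro mult_mono power_mono) auto
  also have "\<dots> \<le> R ^ n"
    unfolding power_add[symmetric] using assms by (intro power_increasing) auto
  finally show ?thesis .
qed

lemma norm_kernel_term_le:
  assumes R: "1 \<le> R" "norm z \<le> R" "norm w \<le> R"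
  shows "norm (kernel_term k z w) \<le> 4 * R * (R ^ 4) ^ k / fact k"
proof -
  have "norm (of_real (zcoef k) * of_real (wcoef l)
      * (z ^ (2 * k + 1) * w ^ (2 * l) - w ^ (2 * k + 1) * z ^ (2 * l))) \<le> 1 / fact (k + 1) * 2 * (2 * R ^ (4 * k + 1))"
    if "l \<le> k" for l
  proof -
    have "norm (z ^ (2 * k + 1) * w ^ (2 * l) - w ^ (2 * k + 1) * z ^ (2 * l))
        \<le> norm (z ^ (2 * k + 1) * w ^ (2 * l)) + norm (w ^ (2 * k + 1) * z ^ (2 * l))"
      by (rule norm_triangle_ineq4)
    also have "\<dots> \<le> 2 * R ^ (4 * k + 1)"
      using norm_power_mult_le[OF R, of "2 * k + 1" "2 * l" "4 * k + 1"]
        norm_power_mult_le[OF R(1,3,2), of "2 * k + 1" "2 * l" "4 * k + 1"] that by simp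
    finally show ?thesis
      unfolding norm_mult norm_of_real
      using zcoef_le[of k] wcoef_le[of l] zcoef_nonneg wcoef_nonneg
      by (intro mult_mono) auto
  qed
  then have "norm (kernel_term k z w) \<le> (\<Sum>l\<le>k. 1 / fact (k + 1) * 2 * (2 * R ^ (4 * k + 1)))"
    unfolding kernel_term_def by (intro order_trans[OF norm_sum sum_mono]) auto
  also have "\<dots> = real (k + 1) * (4 * R * (R ^ 4) ^ k) / fact (k + 1)"
    by (simp add: power_add power_mult)
  also have "\<dots> = 4 * R * (R ^ 4) ^ k / fact k"
    by (simp del: of_nat_add)
  finally show ?thesis .
qed

definition kappa_inf :: "complex \<times> complex \<Rightarrow> complex" where
  "kappa_inf p = (\<Sum>k. kernel_term k (fst p) (snd p))"

lemma uniform_limit_kappaN: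
  assumes "bounded S"
  shows "uniform_limit S (\<lambda>N p. kappaN N (fst p) (snd p)) kappa_inf sequentially"
proof -
  obtain R where R: "1 \<le> R" "\<And>p. p \<in> S \<Longrightarrow> norm p \<le> R"
    using assms by (meson bounded_pos less_eq_real_def max.cobounded1 max.cobounded2 order_trans)
  have "uniform_limit S (\<lambda>N p. \<Sum>k<N. kernel_term k (fst p) (snd p)) kappa_inf sequentially"
    unfolding kappa_inf_def
  proof (rule Weierstrass_m_test)
    show "norm (kernel_term k (fst p) (snd p)) \<le> 4 * R * ((R ^ 4) ^ k / fact k)" if "p \<in> S" for k p
    proof -
      have "norm (fst p) \<le> R" "norm (snd p) \<le> R"
        using R(2)[OF that] norm_fst_le[of "fst p" "snd p"] norm_snd_le[of "snd p" "fst p"] by auto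
      then show ?thesis
        using norm_kernel_term_le[OF R(1)] by simp
    qed
    show "summable (\<lambda>k. 4 * R * ((R ^ 4) ^ k / fact k))"
      using summable_exp[of "R ^ 4"] by (intro summable_mult) (simp add: field_simps)
  qed
  then show ?thesis
    by (simp add: kappaN_eq_sum_kernel_term)
qed

lemma kappaN_tendsto: "(\<lambda>N. kappaN N z w) \<longlonglongrightarrow> kappa_inf (z, w)"
  using tendsto_uniform_limitI[OF uniform_limit_kappaN[of "{(z, w)}"]] by simp

lemma continuous_on_kappa_inf: "continuous_on UNIV kappa_inf"
proof -
  have "continuous_on (cball p 1) kappa_inf" for p
    by (rule uniform_limit_theorem[OF _ uniform_limit_kappaN])
       (auto intro!: always_eventually continuous_intros simp: kappaN_eq_sum_kernel_term kernel_term_def)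
  then show ?thesis
    by (metis continuous_at_imp_continuous_on continuous_on_interior centre_in_ball
        interior_cball zero_less_one)
qed

lemma kappa_inf_swap: "kappa_inf (w, z) = - kappa_inf (z, w)"
proof -
  have "(\<lambda>N. kappaN N w z) \<longlonglongrightarrow> - kappa_inf (z, w)"
    using tendsto_minus[OF kappaN_tendsto[of z w]] by (simp add: kappaN_def)
  then show ?thesis
    using kappaN_tendsto LIMSEQ_unique by blast
qed

definition kappahat_inf :: "complex \<Rightarrow> complex \<Rightarrow> complex" where
  "kappahat_inf z w = (z * w) ^ 3 * kappa_inf (z, w)"

lemma uniform_limit_kappahatN:
  "uniform_limit (cball 0 R) (\<lambda>N z. kappahatN N z w) (\<lambda>z. kappahat_inf z w) sequentially"
proof -
  define S where "S = (\<lambda>z::complex. (z, w)) ` cball 0 R"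
  have "compact S"
    unfolding S_def by (auto intro!: compact_continuous_image continuous_intros)
  then have "uniform_limit S (\<lambda>N p. kappaN N (fst p) (snd p)) kappa_inf sequentially"
    by (intro uniform_limit_kappaN compact_imp_bounded)
  then have "uniform_limit (cball 0 R) (\<lambda>N z. kappaN N (fst (z, w)) (snd (z, w)))
      (\<lambda>z. kappa_inf (z, w)) sequentially"
    by (rule uniform_limit_compose') (auto simp: S_def)
  then have "uniform_limit (cball 0 R) (\<lambda>N z. kappaN N z w) (\<lambda>z. kappa_inf (z, w)) sequentially"
    by simp
  moreover have "bounded ((\<lambda>z. kappa_inf (z, w)) ` cball 0 R)" "bounded ((\<lambda>z. (z * w) ^ 3) ` cball 0 R)"
    using continuous_on_kappa_inf
    by (auto intro!: compact_imp_bounded compact_continuous_image continuous_intros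
             intro: continuous_on_compose2[of UNIV kappa_inf])
  ultimately show ?thesis
    unfolding kappahatN_def kappahat_inf_def
    by (intro uniform_lim_mult uniform_limit_const)
qed

lemma holomorphic_kappahatN: "(\<lambda>z. kappahatN N z w) holomorphic_on A"
  unfolding kappahatN_eq_power_sum by (intro holomorphic_intros)

lemma holomorphic_kappahat_inf: "(\<lambda>z. kappahat_inf z w) holomorphic_on UNIV"
proof -
  have "(\<lambda>z. kappahat_inf z w) holomorphic_on ball 0 R" for R
    by (rule holomorphic_uniform_limit[OF _ uniform_limit_kappahatN])
       (auto intro!: always_eventually holomorphic_on_imp_continuous_on holomorphic_kappahatN)
  then show ?thesis
    by (metis UNIV_I holomorphic_on_def field_differentiable_at_within holomorphic_on_imp_differentiable_at
        open_ball centre_in_ball mem_ball_0 gt_ex)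
qed

lemma kernel_operator_tendsto:
  assumes lim: "uniform_limit A f g sequentially" and holo: "\<And>n. f n holomorphic_on A"
    and A: "open A" "z \<in> A"
  shows "(\<lambda>n. kernel_operator (f n) z) \<longlonglongrightarrow> kernel_operator g z"
proof -
  have "(\<lambda>n. (deriv ^^ m) (f n) z) \<longlonglongrightarrow> (deriv ^^ m) g z" for m
    by (rule higher_deriv_complex_uniform_limit[OF lim]) (use holo A in auto)
  from this[of 0] this[of 1] this[of 2] show ?thesis
    unfolding kernel_operator_def by (auto intro!: tendsto_intros simp: numeral_2_eq_2)
qed

lemma norm_kernel_remainder_le:
  assumes R: "1 \<le> R" "norm z \<le> R" "norm w \<le> R"
  shows "norm (kernel_remainder N z w) \<le> 8 * R ^ 4 * ((4 * R ^ 4) ^ N / fact N)"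
proof -
  have "norm (\<Sum>l<N. of_real (wcoef l) * w ^ (2 * l + 3)) \<le> (\<Sum>l<N. 2 * R ^ (2 * N + 1))"
  proof (intro order_trans[OF norm_sum sum_mono])
    fix l assume "l \<in> {..<N}"
    then have "norm (w ^ (2 * l + 3)) \<le> R ^ (2 * N + 1)"
      using norm_power_mult_le[OF R(1,3,3), of "2 * l + 3" 0 "2 * N + 1"] by simp
    then show "norm (of_real (wcoef l) * w ^ (2 * l + 3)) \<le> 2 * R ^ (2 * N + 1)"
      unfolding norm_mult norm_of_real using wcoef_le[of l] wcoef_nonneg[of l]
      by (intro mult_mono) auto
  qed
  moreover have "norm (z ^ (2 * N + 3)) \<le> R ^ (2 * N + 3)"
    using norm_power_mult_le[OF R(1,2,2), of "2 * N + 3" 0] by simp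
  ultimately have "norm (kernel_remainder N z w)
      \<le> tail_coef N * R ^ (2 * N + 3) * (real N * (2 * R ^ (2 * N + 1)))"
    unfolding kernel_remainder_def norm_mult norm_of_real
    using R(1) by (intro mult_mono) (auto simp: tail_coef_def)
  also have "\<dots> = (real N * tail_coef N) * (2 * (R ^ (2 * N + 3) * R ^ (2 * N + 1)))"
    by (simp add: algebra_simps)
  also have "\<dots> \<le> 4 * 4 ^ N / fact N * (2 * (R ^ (2 * N + 3) * R ^ (2 * N + 1)))"
    using R(1) by (intro mult_right_mono tail_coef_mult_le) simp
  also have "\<dots> = 8 * R ^ 4 * ((4 * R ^ 4) ^ N / fact N)"
  proof -
    have "R ^ (2 * N + 3) * R ^ (2 * N + 1) = R ^ (4 * N + 4)"
      unfolding power_add[symmetric] by (simp add: algebra_simps)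
    also have "\<dots> = R ^ 4 * (R ^ 4) ^ N"
      by (simp add: power_add mult.commute flip: power_mult)
    finally have "R ^ (2 * N + 3) * R ^ (2 * N + 1) = R ^ 4 * (R ^ 4) ^ N" .
    then show ?thesis
      by (simp add: power_mult_distrib)
  qed
  finally show ?thesis .
qed

lemma kernel_remainder_tendsto_0: "(\<lambda>N. kernel_remainder N z w) \<longlonglongrightarrow> 0"
proof -
  define R where "R = max 1 (max (norm z) (norm w))"
  have R: "1 \<le> R" "norm z \<le> R" "norm w \<le> R"
    unfolding R_def by auto
  have "(\<lambda>N. 8 * R ^ 4 * ((4 * R ^ 4) ^ N / fact N)) \<longlonglongrightarrow> 0"
    using summable_LIMSEQ_zero[OF summable_exp[of "4 * R ^ 4"]]
    by (intro tendsto_mult_right_zero) (simp add: field_simps)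
  then show ?thesis
    by (rule Lim_null_comparison[rotated]) (use norm_kernel_remainder_le[OF R] in auto)
qed

lemma exp_partial_sums_tendsto: "(\<lambda>N. \<Sum>j<2 * N. x ^ j / fact j) \<longlonglongrightarrow> exp (x :: complex)"
proof -
  have "(\<lambda>n. \<Sum>j<n. x ^ j / fact j) \<longlonglongrightarrow> exp x"
    using exp_converges[of x] by (simp add: sums_def scaleR_conv_of_real divide_inverse mult.commute)
  from LIMSEQ_subseq_LIMSEQ[OF this, of "\<lambda>n. 2 * n"] show ?thesis
    by (simp add: strict_mono_def o_def)
qed

lemma kernel_operator_kappahat_inf:
  "kernel_operator (\<lambda>z. kappahat_inf z w) z = 4 * (z * w) ^ 3 * exp (2 * z * w)"
proof -
  have "uniform_limit (ball 0 (norm z + 1)) (\<lambda>N z. kappahatN N z w) (\<lambda>z. kappahat_inf z w) sequentially"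
    by (rule uniform_limit_on_subset[OF uniform_limit_kappahatN[where R = "norm z + 1"]]) auto
  then have "(\<lambda>N. kernel_operator (\<lambda>z. kappahatN N z w) z) \<longlonglongrightarrow> kernel_operator (\<lambda>z. kappahat_inf z w) z"
    by (rule kernel_operator_tendsto) (auto intro: holomorphic_kappahatN)
  moreover have "(\<lambda>N. kernel_operator (\<lambda>z. kappahatN N z w) z) \<longlonglongrightarrow> 4 * (z * w) ^ 3 * exp (2 * z * w) - 0"
    unfolding kernel_operator_kappahatN
    by (intro tendsto_intros exp_partial_sums_tendsto kernel_remainder_tendsto_0)
  ultimately show ?thesis
    using LIMSEQ_unique by fastforce
qed

section \<open>The limit kernel\<close>

definition kappahat_lim :: "complex \<Rightarrow> complex \<Rightarrow> complex" where
  "kappahat_lim z w =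
     of_real (sqrt pi) / 4 * (2 * z ^ 2 - 1) * (2 * w ^ 2 - 1) * exp (z ^ 2 + w ^ 2)
       * (cerf (z - w) + cerf w - cerf z)
     - z * (2 * w ^ 2 - 1) / 2 * exp (w ^ 2) + w * (2 * z ^ 2 - 1) / 2 * exp (z ^ 2)
     - (z - w) / 2 * exp (2 * z * w)"

lemma kappa_lim_eq_kappahat_lim: "z \<noteq> 0 \<Longrightarrow> w \<noteq> 0 \<Longrightarrow> kappa_lim z w = kappahat_lim z w / (z * w) ^ 3"
  unfolding kappa_lim_def kappahat_lim_def exp_add by (simp add: field_simps) algebra

lemma kappahat_lim_swap: "kappahat_lim w z = - kappahat_lim z w"
proof -
  have "cerf (w - z) = - cerf (z - w)"
    using cerf_minus[of "z - w"] by simp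
  then show ?thesis
    unfolding kappahat_lim_def by (simp add: field_simps)
qed

lemma kappahat_lim_0: "kappahat_lim 0 w = 0"
  unfolding kappahat_lim_def by (simp add: cerf_minus)

lemma holomorphic_kappahat_lim: "(\<lambda>z. kappahat_lim z w) holomorphic_on UNIV"
  unfolding kappahat_lim_def by (auto intro!: holomorphic_intros)

definition cerf_combination :: "complex \<Rightarrow> complex \<Rightarrow> complex" where
  "cerf_combination w z = of_real (sqrt pi) / 4 * exp (w ^ 2) * (cerf (z - w) + cerf w - cerf z)"

lemma has_field_derivative_cerf_combination:
  "(cerf_combination w has_field_derivative (exp (2 * z * w - z ^ 2) - exp (w ^ 2 - z ^ 2)) / 2) (at z)"
proof -
  define p where "p = complex_of_real (sqrt pi)"
  have D: "(cerf_combination w has_field_derivative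
      p / 4 * exp (w ^ 2) * (2 / p * exp (- ((z - w) ^ 2)) * 1 - 2 / p * exp (- (z ^ 2)))) (at z)"
    unfolding cerf_combination_def[abs_def] p_def
    by (intro DERIV_cmult DERIV_diff DERIV_add has_field_derivative_cerf_compose has_field_derivative_cerf
        DERIV_const derivative_eq_intros) auto
  have "p \<noteq> 0"
    by (simp add: p_def)
  then have "p / 4 * exp (w ^ 2) * (2 / p * exp (- ((z - w) ^ 2)) * 1 - 2 / p * exp (- (z ^ 2)))
      = (exp (w ^ 2) * exp (- ((z - w) ^ 2)) - exp (w ^ 2) * exp (- (z ^ 2))) / 2"
    by (simp add: field_simps)
  also have "\<dots> = (exp (2 * z * w - z ^ 2) - exp (w ^ 2 - z ^ 2)) / 2"
    unfolding mult_exp_exp by (simp add: power2_eq_square algebra_simps)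
  finally show ?thesis
    using D by (simp only:)
qed

lemma kappahat_lim_eq_cerf_combination:
  "kappahat_lim z w = (2 * w ^ 2 - 1) * (ode_sol_even z * cerf_combination w z)
     - (2 * w ^ 2 - 1) / 2 * exp (w ^ 2) * z + w / 2 * ode_sol_even z - (z - w) / 2 * exp (2 * z * w)"
  unfolding kappahat_lim_def cerf_combination_def ode_sol_even_def exp_add by (simp add: field_simps)

lemma kernel_operator_kappahat_lim:
  "kernel_operator (\<lambda>z. kappahat_lim z w) z = 4 * (z * w) ^ 3 * exp (2 * z * w)"
proof -
  define c where "c = 2 * w ^ 2 - 1"
  define u' where "u' z = (exp (2 * z * w - z ^ 2) - exp (w ^ 2 - z ^ 2)) / 2" for z
  define u'' where "u'' z = ((2 * w - 2 * z) * exp (2 * z * w - z ^ 2) + 2 * z * exp (w ^ 2 - z ^ 2)) / 2" for z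
  define H1 where "H1 z = c * (ode_sol_even' z * cerf_combination w z + ode_sol_even z * u' z) - c / 2 * exp (w ^ 2)
      + w / 2 * ode_sol_even' z - (1 + 2 * w * (z - w)) * exp (2 * z * w) / 2" for z
  define H2 where "H2 z = c * (ode_sol_even'' z * cerf_combination w z + 2 * ode_sol_even' z * u' z
      + ode_sol_even z * u'' z) + w / 2 * ode_sol_even'' z - (4 * w + 4 * w ^ 2 * (z - w)) * exp (2 * z * w) / 2" for z
  have u: "(cerf_combination w has_field_derivative u' z) (at z)" "(u' has_field_derivative u'' z) (at z)" for z
    unfolding u'_def[abs_def] u''_def
    by (rule has_field_derivative_cerf_combination) (auto intro!: derivative_eq_intros simp: field_simps)
  note f1 = has_field_derivative_ode_sol_even has_field_derivative_ode_sol_even'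
  have "kernel_operator (\<lambda>z. kappahat_lim z w) z = z * H2 z - (2 * z ^ 2 + 2) * H1 z - 2 * z * kappahat_lim z w"
    unfolding kappahat_lim_eq_cerf_combination c_def[symmetric]
  proof (rule kernel_operator_eq)
    show "((\<lambda>z. c * (ode_sol_even z * cerf_combination w z) - c / 2 * exp (w ^ 2) * z + w / 2 * ode_sol_even z
        - (z - w) / 2 * exp (2 * z * w)) has_field_derivative H1 z) (at z)" for z
      unfolding H1_def by (auto intro!: derivative_eq_intros f1 u simp: field_simps)
    show "(H1 has_field_derivative H2 z) (at z)" for z
      unfolding H1_def[abs_def] H2_def
      by (auto intro!: derivative_eq_intros f1 u simp: field_simps power2_eq_square)
  qed
  also have "\<dots> = 4 * (z * w) ^ 3 * exp (2 * z * w)"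
  proof -
    define X where "X = exp (z ^ 2)"
    define A where "A = exp (2 * z * w - z ^ 2)"
    define B where "B = exp (w ^ 2 - z ^ 2)"
    have "exp (2 * z * w) = X * A" "exp (w ^ 2) = X * B"
      unfolding X_def A_def B_def mult_exp_exp by simp_all
    then have "2 * (z * H2 z - (2 * z ^ 2 + 2) * H1 z - 2 * z * kappahat_lim z w)
        = 2 * (4 * (z * w) ^ 3 * exp (2 * z * w))"
      unfolding kappahat_lim_eq_cerf_combination H2_def H1_def u'_def u''_def c_def ode_sol_even_def
        ode_sol_even'_def ode_sol_even''_def A_def[symmetric] B_def[symmetric] X_def[symmetric]
        ring_distribs times_divide_eq_right mult_2_right
      by algebra
    then show ?thesis
      by (rule mult_left_cancel[THEN iffD1, rotated]) simp
  qed
  finally show ?thesis .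
qed

lemma skew_symmetric_separable_eq_0:
  assumes skew: "\<And>z w. D z w = - D w z"
    and separable: "\<And>w. \<exists>C. \<forall>z. D z w = C * g z"
    and z0: "g z0 \<noteq> (0 :: 'a :: field_char_0)"
  shows "D z w = 0"
proof -
  have vanish: "D z w = 0" if "D z0 w = 0" for z w
  proof -
    obtain C where C: "\<And>z. D z w = C * g z"
      using separable by blast
    then show ?thesis
      using that C[of z0] z0 by simp
  qed
  have "D z0 z0 = 0"
    using skew[of z0 z0] by simp
  then have "D w z0 = 0"
    by (rule vanish)
  then have "D z0 w = 0"
    using skew[of z0 w] by simp
  then show ?thesis
    by (rule vanish)
qed

lemma kappa_inf_eq_kappa_lim:
  assumes "z \<noteq> 0" "w \<noteq> 0"
  shows "kappa_inf (z, w) = kappa_lim z w"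
proof -
  define D where "D z w = kappahat_inf z w - kappahat_lim z w" for z w
  define a where "a = complex_of_real (sqrt (1 / 2))"
  have skew: "D z w = - D w z" for z w
    unfolding D_def kappahat_inf_def kappa_inf_swap[of z w] kappahat_lim_swap[of z w]
    by (simp add: algebra_simps)
  have separable: "\<exists>C. \<forall>z. D z w = C * ode_sol_odd z" for w
  proof (rule kernel_operator_homogeneous)
    show "(\<lambda>z. D z w) holomorphic_on UNIV"
      unfolding D_def using holomorphic_kappahat_inf holomorphic_kappahat_lim
      by (rule holomorphic_on_diff)
    show "kernel_operator (\<lambda>z. D z w) z = 0" for z
      unfolding D_def kernel_operator_diff[OF holomorphic_kappahat_inf holomorphic_kappahat_lim]
      by (simp add: kernel_operator_kappahat_inf kernel_operator_kappahat_lim)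
    show "D 0 w = 0"
      by (simp add: D_def kappahat_inf_def kappahat_lim_0)
  qed
  \<comment> \<open>At a zero of \<open>2 z\<^sup>2 - 1\<close>, \<open>ode_sol_odd\<close> reduces to the identity.\<close>
  have "2 * a ^ 2 = 1"
    unfolding a_def by (simp flip: of_real_power)
  then have "ode_sol_odd a \<noteq> 0"
    by (simp add: ode_sol_odd_def ode_sol_even_def a_def)
  with skew separable have "D z w = 0"
    by (rule skew_symmetric_separable_eq_0)
  then show ?thesis
    using assms by (simp add: D_def kappahat_inf_def kappa_lim_eq_kappahat_lim field_simps)
qed

lemma kappahatN_equation:
  "z * deriv (\<lambda>z. deriv (\<lambda>z. kappahatN N z w) z) z
     - (2*z^2 + 2) * deriv (\<lambda>z. kappahatN N z w) z
     - 2 * z * kappahatN N z w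
   = 4 * (z*w)^3 * (\<Sum>k<2*N. (2*z*w)^k / of_nat (fact k))
     - 1/2 * (of_nat ((2*N+1) * (2*N+3)) / of_nat (dfact (2*N+2)))
       * (complex_of_real (sqrt 2) * z) ^ (2*N+3)
       * (\<Sum>l<N. of_nat (2*l+2) / of_nat (dfact (2*l+3))
            * (complex_of_real (sqrt 2) * w) ^ (2*l+3))"
  using kernel_operator_kappahatN[of N w z]
  unfolding kernel_operator_def kernel_remainder_eq[symmetric] by simp

theorem proposition3p1:
  shows "(\<forall>N::nat. N \<ge> 1 \<longrightarrow> (\<forall>z w :: complex.
            z * deriv (\<lambda>z. deriv (\<lambda>z. kappahatN N z w) z) z
            - (2*z^2 + 2) * deriv (\<lambda>z. kappahatN N z w) z
            - 2 * z * kappahatN N z w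
          = 4 * (z*w)^3 * (\<Sum>k<2*N. (2*z*w)^k / of_nat (fact k))
            - 1/2 * (of_nat ((2*N+1) * (2*N+3)) / of_nat (dfact (2*N+2)))
              * (complex_of_real (sqrt 2) * z) ^ (2*N+3)
              * (\<Sum>l<N. of_nat (2*l+2) / of_nat (dfact (2*l+3))
                   * (complex_of_real (sqrt 2) * w) ^ (2*l+3))))
       \<and> (\<exists>K :: complex \<times> complex \<Rightarrow> complex.
            continuous_on UNIV K
            \<and> (\<forall>z w. z \<noteq> 0 \<longrightarrow> w \<noteq> 0 \<longrightarrow> K (z, w) = kappa_lim z w)
            \<and> (\<forall>S. compact S \<longrightarrow>
                 uniform_limit S (\<lambda>N p. kappaN N (fst p) (snd p)) K sequentially))"
  using kappahatN_equation continuous_on_kappa_inf kappa_inf_eq_kappa_lim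
    uniform_limit_kappaN[OF compact_imp_bounded]
  by blast

end
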